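(* Let $G$ be a graph and $s:V(G)\to\mathbb{N}$ a function. Suppose that every correspondence-cover $(L^-,H^-)$ of $G$ with $|L^-(v)|=s(v)$ for all $v\in V(G)$ has a fractional packing. Then every correspondence-cover $(L,H)$ of $G$ with $|L(v)|\geq s(v)$ for all $v$ has a fractional packing. The same statement holds with "correspondence-cover" replaced by "list-cover" throughout. In particular, every correspondence-cover $(L,H)$ of $G$ with $|L(v)|\ge \chi_c^\bullet(G)$ for all $v$ has a fractional packing.
   Context: All graphs are finite and simple. A correspondence-cover of a graph $G$ is a pair $(L,H)$ where $H$ is a graph and $L$ maps each $v\in V(G)$ to a subset $L(v)\subseteq V(H)$ such that: the sets $L(v)$ partition $V(H)$; each $L(v)$ induces a clique in $H$; if $uv\notin E(G)$ there are no edges of $H$ between $L(u)$ and $L(v)$; if $uv\in E(G)$ the edges of $H$ between $L(u)$ and $L(v)$ form a matching. A list-cover is the correspondence-cover arising from a list-assignment $v\mapsto L(v)\subseteq\mathbb{N}$: vertices $(v,x)$ with $x\in L(v)$, cliques on each list, and edges $(u,x)(v,x)$ for every $uv\in E(G)$ and common color $x$. An independent transversal of $(L,H)$ is an independent set of $H$ containing exactly one vertex of each $L(v)$. A cover has a fractional packing if there is a probability distribution on independent transversals $I$ such that $\Pr(x\in I)=1/|L(v)|$ for every $v$ and every $x\in L(v)$ (lists need not all have the same size). $\chi_c^{\bullet}(G)$ is the least $k\ge1$ such that every correspondence-cover with all lists of size $k$ has a fractional packing. *)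

theory Defs
  imports "HOL-Probability.Probability_Mass_Function"
begin

definition graph :: "'v set \<Rightarrow> ('v \<Rightarrow> 'v \<Rightarrow> bool) \<Rightarrow> bool" where
  "graph V E \<longleftrightarrow> finite V \<and>
     (\<forall>u v. E u v \<longrightarrow> u \<in> V \<and> v \<in> V \<and> u \<noteq> v \<and> E v u)"

definition corr_cover ::
  "'v set \<Rightarrow> ('v \<Rightarrow> 'v \<Rightarrow> bool) \<Rightarrow> ('v \<Rightarrow> 'h set) \<Rightarrow> 'h set \<Rightarrow> ('h \<Rightarrow> 'h \<Rightarrow> bool) \<Rightarrow> bool" where
  "corr_cover V E L VH EH \<longleftrightarrow>
     finite VH \<and>
     (\<forall>x y. EH x y \<longrightarrow> x \<in> VH \<and> y \<in> VH \<and> x \<noteq> y \<and> EH y x) \<and>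
     (\<Union>v\<in>V. L v) = VH \<and>
     (\<forall>u\<in>V. \<forall>v\<in>V. u \<noteq> v \<longrightarrow> L u \<inter> L v = {}) \<and>
     (\<forall>v\<in>V. \<forall>x\<in>L v. \<forall>y\<in>L v. x \<noteq> y \<longrightarrow> EH x y) \<and>
     (\<forall>u\<in>V. \<forall>v\<in>V. u \<noteq> v \<and> \<not> E u v \<longrightarrow> (\<forall>x\<in>L u. \<forall>y\<in>L v. \<not> EH x y)) \<and>
     (\<forall>u\<in>V. \<forall>v\<in>V. E u v \<longrightarrow>
        (\<forall>x\<in>L u. \<forall>y\<in>L v. \<forall>y'\<in>L v. EH x y \<and> EH x y' \<longrightarrow> y = y'))"

definition lc_L :: "('v \<Rightarrow> nat set) \<Rightarrow> 'v \<Rightarrow> ('v \<times> nat) set" where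
  "lc_L Lst v = {v} \<times> Lst v"

definition lc_V :: "'v set \<Rightarrow> ('v \<Rightarrow> nat set) \<Rightarrow> ('v \<times> nat) set" where
  "lc_V V Lst = {(v, x). v \<in> V \<and> x \<in> Lst v}"

definition lc_E :: "'v set \<Rightarrow> ('v \<Rightarrow> 'v \<Rightarrow> bool) \<Rightarrow> ('v \<Rightarrow> nat set)
    \<Rightarrow> ('v \<times> nat) \<Rightarrow> ('v \<times> nat) \<Rightarrow> bool" where
  "lc_E V E Lst p q \<longleftrightarrow> p \<in> lc_V V Lst \<and> q \<in> lc_V V Lst \<and>
     ((fst p = fst q \<and> snd p \<noteq> snd q) \<or> (E (fst p) (fst q) \<and> snd p = snd q))"

definition indep_transversal ::
  "'v set \<Rightarrow> ('v \<Rightarrow> 'h set) \<Rightarrow> 'h set \<Rightarrow> ('h \<Rightarrow> 'h \<Rightarrow> bool) \<Rightarrow> 'h set \<Rightarrow> bool" where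
  "indep_transversal V L VH EH I \<longleftrightarrow>
     I \<subseteq> VH \<and> (\<forall>x\<in>I. \<forall>y\<in>I. \<not> EH x y) \<and> (\<forall>v\<in>V. card (I \<inter> L v) = 1)"

definition has_frac_packing ::
  "'v set \<Rightarrow> ('v \<Rightarrow> 'h set) \<Rightarrow> 'h set \<Rightarrow> ('h \<Rightarrow> 'h \<Rightarrow> bool) \<Rightarrow> bool" where
  "has_frac_packing V L VH EH \<longleftrightarrow>
     (\<exists>p :: 'h set pmf.
        (\<forall>I\<in>set_pmf p. indep_transversal V L VH EH I) \<and>
        (\<forall>v\<in>V. \<forall>x\<in>L v. measure_pmf.prob p {I. x \<in> I} = 1 / real (card (L v))))"

text \<open>The fractional correspondence packing number. Covers are quantified with
  H-vertices of type nat (no loss: covers are finite, so every cover is isomorphic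
  to one on nat).\<close>
definition chi_c_bullet :: "'v set \<Rightarrow> ('v \<Rightarrow> 'v \<Rightarrow> bool) \<Rightarrow> nat" where
  "chi_c_bullet V E = (LEAST k. k \<ge> 1 \<and>
     (\<forall>(L :: 'v \<Rightarrow> nat set) VH EH. corr_cover V E L VH EH \<and> (\<forall>v\<in>V. card (L v) = k)
        \<longrightarrow> has_frac_packing V L VH EH))"

end

theory Submission
  imports Defs
begin

text \<open>
  If some list \<open>L v\<close> is longer than \<open>s v\<close>, delete one of its entries \<open>x\<close>, in each of the \<open>m = |L v|\<close>
  possible ways. By induction on the total excess \<open>\<Sum>v. |L v| - s v\<close> every deletion has a fractional
  packing, and choosing \<open>x\<close> uniformly at random and then a transversal from the packing of that deletion
  gives a packing of the original cover: an entry \<open>y \<in> L v\<close> survives \<open>m - 1\<close> of the deletions and is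
  then chosen with probability \<open>1/(m - 1)\<close>, while entries of other lists are unaffected. List-covers are
  closed under deleting an entry, so the same induction applies to them.

  For \<open>\<chi>\<^sub>c\<^sup>\<bullet>\<close> one also needs that the least element in its definition exists: if all lists have size
  \<open>k > 2|V(G)|\<close>, colouring the lists one vertex at a time (an injection avoiding at most \<open>|V(G)|\<close> conflicts
  per entry and per colour, found by a swapping argument) yields a proper colouring of \<open>H\<close> that is a
  bijection from every list onto \<open>k\<close> colours, and a uniformly random colour class is a packing. Covers
  on an arbitrary vertex type are reduced to covers on \<open>nat\<close> by an injective relabelling.
\<close>

lemma corr_cover_finite: "corr_cover V E L VH EH \<Longrightarrow> finite VH"
  unfolding corr_cover_def by (elim conjE) blast

lemma corr_cover_edgeD:
  "corr_cover V E L VH EH \<Longrightarrow> EH x y \<Longrightarrow> x \<in> VH \<and> y \<in> VH \<and> x \<noteq> y \<and> EH y x"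
  unfolding corr_cover_def by (elim conjE) blast

lemma corr_cover_UN: "corr_cover V E L VH EH \<Longrightarrow> (\<Union>v\<in>V. L v) = VH"
  unfolding corr_cover_def by (elim conjE) blast

lemma corr_cover_disjoint:
  "corr_cover V E L VH EH \<Longrightarrow> u \<in> V \<Longrightarrow> v \<in> V \<Longrightarrow> u \<noteq> v \<Longrightarrow> L u \<inter> L v = {}"
  unfolding corr_cover_def by (elim conjE) blast

lemma corr_cover_clique:
  "corr_cover V E L VH EH \<Longrightarrow> v \<in> V \<Longrightarrow> x \<in> L v \<Longrightarrow> y \<in> L v \<Longrightarrow> x \<noteq> y \<Longrightarrow> EH x y"
  unfolding corr_cover_def by (elim conjE) blast

lemma corr_cover_adjacent:
  "corr_cover V E L VH EH \<Longrightarrow> u \<in> V \<Longrightarrow> v \<in> V \<Longrightarrow> u \<noteq> v \<Longrightarrow> x \<in> L u \<Longrightarrow> y \<in> L v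
    \<Longrightarrow> EH x y \<Longrightarrow> E u v"
  unfolding corr_cover_def by (elim conjE) meson

lemma corr_cover_matching:
  "corr_cover V E L VH EH \<Longrightarrow> u \<in> V \<Longrightarrow> v \<in> V \<Longrightarrow> E u v \<Longrightarrow> x \<in> L u \<Longrightarrow> y \<in> L v \<Longrightarrow> y' \<in> L v
    \<Longrightarrow> EH x y \<Longrightarrow> EH x y' \<Longrightarrow> y = y'"
  unfolding corr_cover_def by (elim conjE) blast

lemma corr_cover_list_subset: "corr_cover V E L VH EH \<Longrightarrow> v \<in> V \<Longrightarrow> L v \<subseteq> VH"
  using corr_cover_UN by blast

lemma corr_cover_list_finite: "corr_cover V E L VH EH \<Longrightarrow> v \<in> V \<Longrightarrow> finite (L v)"
  using corr_cover_list_subset corr_cover_finite finite_subset by metis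

lemma corr_cover_card_neighbours_le_1:
  assumes c: "corr_cover V E L VH EH" and "u \<in> V" "v \<in> V" "u \<noteq> v" "x \<in> L u"
  shows "card {y \<in> L v. EH x y} \<le> 1"
proof -
  have "y = y'" if "y \<in> L v" "EH x y" "y' \<in> L v" "EH x y'" for y y'
    using corr_cover_matching[OF c _ _ corr_cover_adjacent[OF c]] assms that by metis
  then show ?thesis
    using corr_cover_list_finite[OF c \<open>v \<in> V\<close>] by (auto simp: card_le_Suc0_iff_eq)
qed

lemma corr_cover_delete:
  assumes c: "corr_cover V E L VH EH" and "v0 \<in> V" "x \<in> L v0"
  shows "corr_cover V E (L(v0 := L v0 - {x})) (VH - {x}) (\<lambda>a b. EH a b \<and> a \<noteq> x \<and> b \<noteq> x)"
proof -
  let ?L = "L(v0 := L v0 - {x})"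
  have x_only: "x \<notin> L v" if "v \<in> V" "v \<noteq> v0" for v
    using corr_cover_disjoint[OF c that(1) \<open>v0 \<in> V\<close> that(2)] \<open>x \<in> L v0\<close> by blast
  have mem: "a \<in> L v \<and> a \<noteq> x" if "v \<in> V" "a \<in> ?L v" for a v
    using that x_only by (cases "v = v0") auto
  have "(\<Union>v\<in>V. ?L v) = (\<Union>v\<in>V. L v) - {x}"
    using \<open>v0 \<in> V\<close> x_only by auto
  then have UN: "(\<Union>v\<in>V. ?L v) = VH - {x}" using corr_cover_UN[OF c] by simp
  show ?thesis unfolding corr_cover_def
  proof (intro conjI)
    show "finite (VH - {x})" using corr_cover_finite[OF c] by simp
    show "\<forall>a b. EH a b \<and> a \<noteq> x \<and> b \<noteq> x \<longrightarrow> a \<in> VH - {x} \<and> b \<in> VH - {x} \<and> a \<noteq> b \<and> EH b a \<and> b \<noteq> x \<and> a \<noteq> x"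
      using corr_cover_edgeD[OF c] by blast
    show "(\<Union>v\<in>V. ?L v) = VH - {x}" by (fact UN)
    show "\<forall>u\<in>V. \<forall>v\<in>V. u \<noteq> v \<longrightarrow> ?L u \<inter> ?L v = {}"
      using corr_cover_disjoint[OF c] mem by blast
    show "\<forall>v\<in>V. \<forall>a\<in>?L v. \<forall>b\<in>?L v. a \<noteq> b \<longrightarrow> EH a b \<and> a \<noteq> x \<and> b \<noteq> x"
      using corr_cover_clique[OF c] mem by blast
    show "\<forall>u\<in>V. \<forall>v\<in>V. u \<noteq> v \<and> \<not> E u v \<longrightarrow> (\<forall>a\<in>?L u. \<forall>b\<in>?L v. \<not> (EH a b \<and> a \<noteq> x \<and> b \<noteq> x))"
      using corr_cover_adjacent[OF c] mem by blast
    show "\<forall>u\<in>V. \<forall>v\<in>V. E u v \<longrightarrow> (\<forall>a\<in>?L u. \<forall>b\<in>?L v. \<forall>b'\<in>?L v.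
        (EH a b \<and> a \<noteq> x \<and> b \<noteq> x) \<and> (EH a b' \<and> a \<noteq> x \<and> b' \<noteq> x) \<longrightarrow> b = b')"
      using corr_cover_matching[OF c] mem by blast
  qed
qed

lemma has_frac_packing_list_nonempty:
  assumes "has_frac_packing V L VH EH" "v \<in> V"
  shows "L v \<noteq> {}"
proof -
  obtain p where p: "\<forall>I\<in>set_pmf p. indep_transversal V L VH EH I"
    using assms(1) unfolding has_frac_packing_def by blast
  obtain I where "I \<in> set_pmf p" using set_pmf_not_empty by fast
  with p assms(2) have "card (I \<inter> L v) = 1" unfolding indep_transversal_def by blast
  then show ?thesis by auto
qed

lemma indep_transversal_of_delete:
  assumes "indep_transversal V (L(v0 := L v0 - {x})) (VH - {x}) (\<lambda>a b. EH a b \<and> a \<noteq> x \<and> b \<noteq> x) I"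
  shows "indep_transversal V L VH EH I"
proof -
  have "x \<notin> I" using assms unfolding indep_transversal_def by blast
  then have "I \<inter> (L(v0 := L v0 - {x})) v = I \<inter> L v" for v by auto
  with assms \<open>x \<notin> I\<close> show ?thesis unfolding indep_transversal_def by auto
qed

lemma measure_bind_pmf_of_set:
  assumes "finite S" "S \<noteq> {}"
  shows "measure_pmf.prob (bind_pmf (pmf_of_set S) N) X = (\<Sum>x\<in>S. measure_pmf.prob (N x) X) / card S"
proof -
  have "ennreal (measure_pmf.prob (bind_pmf (pmf_of_set S) N) X) = (\<Sum>x\<in>S. emeasure (N x) X) / card S"
    using assms by (simp add: measure_pmf.emeasure_eq_measure[symmetric] nn_integral_pmf_of_set)
  also have "\<dots> = (\<Sum>x\<in>S. ennreal (measure_pmf.prob (N x) X)) / ennreal (card S)"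
    by (simp add: measure_pmf.emeasure_eq_measure ennreal_of_nat_eq_real_of_nat)
  also have "\<dots> = ennreal ((\<Sum>x\<in>S. measure_pmf.prob (N x) X) / card S)"
    using assms by (subst sum_ennreal, simp, subst divide_ennreal) (auto simp: sum_nonneg card_gt_0_iff)
  finally show ?thesis
    by (subst (asm) ennreal_inj) (auto intro!: divide_nonneg_nonneg sum_nonneg)
qed

lemma prob_mixture_of_deletions:
  fixes P :: "'a \<Rightarrow> 'a set pmf"
  assumes "finite A" "2 \<le> card A" "y \<in> A"
    and "measure_pmf.prob (P y) {I. y \<in> I} = 0"
    and "\<And>x. x \<in> A - {y} \<Longrightarrow> measure_pmf.prob (P x) {I. y \<in> I} = 1 / real (card A - 1)"
  shows "measure_pmf.prob (bind_pmf (pmf_of_set A) P) {I. y \<in> I} = 1 / real (card A)"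
proof -
  have "(\<Sum>x\<in>A. measure_pmf.prob (P x) {I. y \<in> I}) = real (card A - 1) * (1 / real (card A - 1))"
    using assms by (simp add: sum.remove[OF \<open>finite A\<close> \<open>y \<in> A\<close>])
  also have "\<dots> = 1" using \<open>2 \<le> card A\<close> by simp
  finally show ?thesis
    using assms(1,3) by (subst measure_bind_pmf_of_set) auto
qed

lemma has_frac_packing_by_deletion:
  fixes L :: "'v \<Rightarrow> 'h set"
  assumes v0: "v0 \<in> V" and fin: "finite (L v0)" and two: "2 \<le> card (L v0)"
    and disjoint: "\<And>v. v \<in> V \<Longrightarrow> v \<noteq> v0 \<Longrightarrow> L v \<inter> L v0 = {}"
    and deleted: "\<And>x. x \<in> L v0 \<Longrightarrow>
      has_frac_packing V (L(v0 := L v0 - {x})) (VH - {x}) (\<lambda>a b. EH a b \<and> a \<noteq> x \<and> b \<noteq> x)"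
  shows "has_frac_packing V L VH EH"
proof -
  let ?L = "\<lambda>x. L(v0 := L v0 - {x})"
  have "\<forall>x\<in>L v0. \<exists>p. (\<forall>I\<in>set_pmf p. indep_transversal V (?L x) (VH - {x}) (\<lambda>a b. EH a b \<and> a \<noteq> x \<and> b \<noteq> x) I) \<and>
      (\<forall>v\<in>V. \<forall>y\<in>?L x v. measure_pmf.prob p {I. y \<in> I} = 1 / real (card (?L x v)))"
    using deleted unfolding has_frac_packing_def by blast
  then obtain P where P: "\<forall>x\<in>L v0.
      (\<forall>I\<in>set_pmf (P x). indep_transversal V (?L x) (VH - {x}) (\<lambda>a b. EH a b \<and> a \<noteq> x \<and> b \<noteq> x) I) \<and>
      (\<forall>v\<in>V. \<forall>y\<in>?L x v. measure_pmf.prob (P x) {I. y \<in> I} = 1 / real (card (?L x v)))"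
    by (rule bchoice[THEN exE])
  have P_transversal: "\<And>x I. x \<in> L v0 \<Longrightarrow> I \<in> set_pmf (P x) \<Longrightarrow>
        indep_transversal V (?L x) (VH - {x}) (\<lambda>a b. EH a b \<and> a \<noteq> x \<and> b \<noteq> x) I"
    and P_prob: "\<And>x v y. x \<in> L v0 \<Longrightarrow> v \<in> V \<Longrightarrow> y \<in> ?L x v \<Longrightarrow>
        measure_pmf.prob (P x) {I. y \<in> I} = 1 / real (card (?L x v))"
    using P by blast+
  have ne: "L v0 \<noteq> {}" using two by auto
  define p where "p = bind_pmf (pmf_of_set (L v0)) P"
  have "indep_transversal V L VH EH I" if "I \<in> set_pmf p" for I
  proof -
    obtain x where "x \<in> L v0" "I \<in> set_pmf (P x)" using \<open>I \<in> set_pmf p\<close> fin ne by (auto simp: p_def)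
    then show ?thesis by (rule indep_transversal_of_delete[OF P_transversal])
  qed
  moreover have "measure_pmf.prob p {I. y \<in> I} = 1 / real (card (L v))" if "v \<in> V" "y \<in> L v" for v y
  proof -
    show ?thesis
    proof (cases "v = v0")
      case False
      then have "measure_pmf.prob (P x) {I. y \<in> I} = 1 / real (card (L v))" if "x \<in> L v0" for x
        using P_prob[OF that \<open>v \<in> V\<close>] \<open>y \<in> L v\<close> by simp
      then show ?thesis
        using fin ne two unfolding p_def by (simp add: measure_bind_pmf_of_set)
    next
      case True
      have y: "y \<in> L v0" using True \<open>y \<in> L v\<close> by simp
      have "set_pmf (P y) \<inter> {I. y \<in> I} = {}"
        using P_transversal[OF y] unfolding indep_transversal_def by blast
      then have "measure_pmf.prob (P y) {I. y \<in> I} = 0" by (simp add: measure_pmf_zero_iff)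
      moreover have "measure_pmf.prob (P x) {I. y \<in> I} = 1 / real (card (L v0) - 1)" if "x \<in> L v0 - {y}" for x
      proof -
        have "measure_pmf.prob (P x) {I. y \<in> I} = 1 / real (card ((L(v0 := L v0 - {x})) v0))"
          using that y v0 by (intro P_prob) auto
        also have "card ((L(v0 := L v0 - {x})) v0) = card (L v0) - 1" using that fin by simp
        finally show ?thesis .
      qed
      ultimately show ?thesis
        unfolding p_def True using prob_mixture_of_deletions[OF fin two y] by blast
    qed
  qed
  ultimately show ?thesis unfolding has_frac_packing_def by blast
qed

lemma has_frac_packing_upward_closed:
  fixes F :: "('v \<Rightarrow> 'h set) \<Rightarrow> 'h set \<Rightarrow> ('h \<Rightarrow> 'h \<Rightarrow> bool) \<Rightarrow> bool"
  assumes "finite V"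
    and lists_finite: "\<And>L VH EH v. F L VH EH \<Longrightarrow> v \<in> V \<Longrightarrow> finite (L v)"
    and lists_disjoint: "\<And>L VH EH u v. F L VH EH \<Longrightarrow> u \<in> V \<Longrightarrow> v \<in> V \<Longrightarrow> u \<noteq> v \<Longrightarrow> L u \<inter> L v = {}"
    and delete_closed: "\<And>L VH EH v x. F L VH EH \<Longrightarrow> v \<in> V \<Longrightarrow> x \<in> L v \<Longrightarrow>
      F (L(v := L v - {x})) (VH - {x}) (\<lambda>a b. EH a b \<and> a \<noteq> x \<and> b \<noteq> x)"
    and exact: "\<And>L VH EH. F L VH EH \<Longrightarrow> \<forall>v\<in>V. card (L v) = s v \<Longrightarrow> has_frac_packing V L VH EH"
  shows "F L VH EH \<Longrightarrow> \<forall>v\<in>V. s v \<le> card (L v) \<Longrightarrow> has_frac_packing V L VH EH"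
proof (induction "\<Sum>v\<in>V. card (L v) - s v" arbitrary: L VH EH rule: less_induct)
  case less
  show ?case
  proof (cases "\<forall>v\<in>V. card (L v) = s v")
    case True
    then show ?thesis using exact less.prems(1) by blast
  next
    case False
    then obtain v0 where "v0 \<in> V" "card (L v0) \<noteq> s v0" by blast
    with less.prems(2) have v0: "v0 \<in> V" "s v0 < card (L v0)" by (simp_all add: le_neq_implies_less)
    have fin: "finite (L v0)" using lists_finite less.prems(1) v0(1) .
    have deleted: "has_frac_packing V (L(v0 := L v0 - {x})) (VH - {x}) (\<lambda>a b. EH a b \<and> a \<noteq> x \<and> b \<noteq> x)"
      if x: "x \<in> L v0" for x
    proof (rule less.hyps)
      have "card (L v0 - {x}) = card (L v0) - 1" using x fin by simp
      moreover have "(\<Sum>v\<in>V. card ((L(v0 := A)) v) - s v) = (card A - s v0) + (\<Sum>v\<in>V - {v0}. card (L v) - s v)"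
        for A using \<open>finite V\<close> v0(1) by (simp add: sum.remove)
      from this[of "L v0 - {x}"] this[of "L v0"] calculation
      show "(\<Sum>v\<in>V. card ((L(v0 := L v0 - {x})) v) - s v) < (\<Sum>v\<in>V. card (L v) - s v)"
        using v0(2) by simp
      show "F (L(v0 := L v0 - {x})) (VH - {x}) (\<lambda>a b. EH a b \<and> a \<noteq> x \<and> b \<noteq> x)"
        using delete_closed less.prems(1) v0(1) x .
      show "\<forall>v\<in>V. s v \<le> card ((L(v0 := L v0 - {x})) v)"
        using less.prems(2) v0 x fin by auto
    qed
    show ?thesis
    proof (cases "2 \<le> card (L v0)")
      case True
      show ?thesis
      proof (rule has_frac_packing_by_deletion[where L = L, OF v0(1) fin True])
        show "L v \<inter> L v0 = {}" if "v \<in> V" "v \<noteq> v0" for v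
          using lists_disjoint[OF less.prems(1) that(1) v0(1) that(2)] .
      qed (fact deleted)
    next
      case False
      \<comment> \<open>Then \<open>s v0 = 0\<close>, and deleting the only entry of \<open>L v0\<close> leaves an empty list, which has no packing.\<close>
      with v0(2) have "card (L v0) = 1" by linarith
      then obtain x where "L v0 = {x}" by (rule card_1_singletonE)
      then show ?thesis using has_frac_packing_list_nonempty[OF deleted v0(1)] by simp
    qed
  qed
qed

lemma card_lc_L: "card (lc_L Lst v) = card (Lst v)"
  by (simp add: lc_L_def card_cartesian_product_singleton)

lemma lc_delete_colour:
  assumes "v \<in> V"
  shows "lc_L (Lst(v := Lst v - {c})) = (lc_L Lst)(v := lc_L Lst v - {(v, c)})"
    and "lc_V V (Lst(v := Lst v - {c})) = lc_V V Lst - {(v, c)}"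
    and "lc_E V E (Lst(v := Lst v - {c})) = (\<lambda>a b. lc_E V E Lst a b \<and> a \<noteq> (v, c) \<and> b \<noteq> (v, c))"
proof -
  show "lc_L (Lst(v := Lst v - {c})) = (lc_L Lst)(v := lc_L Lst v - {(v, c)})"
    by (auto simp: lc_L_def fun_eq_iff)
  show V: "lc_V V (Lst(v := Lst v - {c})) = lc_V V Lst - {(v, c)}"
    using assms by (auto simp: lc_V_def split: if_splits)
  show "lc_E V E (Lst(v := Lst v - {c})) = (\<lambda>a b. lc_E V E Lst a b \<and> a \<noteq> (v, c) \<and> b \<noteq> (v, c))"
    unfolding lc_E_def V by (intro ext) auto
qed

definition list_cover ::
  "'v set \<Rightarrow> ('v \<Rightarrow> 'v \<Rightarrow> bool) \<Rightarrow> ('v \<Rightarrow> ('v \<times> nat) set) \<Rightarrow> ('v \<times> nat) set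
    \<Rightarrow> (('v \<times> nat) \<Rightarrow> ('v \<times> nat) \<Rightarrow> bool) \<Rightarrow> bool" where
  "list_cover V E L VH EH \<longleftrightarrow>
     (\<exists>Lst. (\<forall>v\<in>V. finite (Lst v)) \<and> L = lc_L Lst \<and> VH = lc_V V Lst \<and> EH = lc_E V E Lst)"

lemma list_cover_delete:
  assumes "list_cover V E L VH EH" "v \<in> V" "x \<in> L v"
  shows "list_cover V E (L(v := L v - {x})) (VH - {x}) (\<lambda>a b. EH a b \<and> a \<noteq> x \<and> b \<noteq> x)"
proof -
  obtain Lst where Lst: "\<forall>v\<in>V. finite (Lst v)" "L = lc_L Lst" "VH = lc_V V Lst" "EH = lc_E V E Lst"
    using assms(1) unfolding list_cover_def by blast
  then obtain c where "x = (v, c)" using assms(3) by (auto simp: lc_L_def)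
  with Lst assms(2) show ?thesis
    unfolding list_cover_def by (intro exI[of _ "Lst(v := Lst v - {c})"]) (simp add: lc_delete_colour)
qed

lemma list_cover_upward_closed:
  assumes "finite V"
    and exact: "\<And>Lst. \<forall>v\<in>V. finite (Lst v) \<and> card (Lst v) = s v
      \<Longrightarrow> has_frac_packing V (lc_L Lst) (lc_V V Lst) (lc_E V E Lst)"
    and "\<forall>v\<in>V. finite (Lst v) \<and> s v \<le> card (Lst v)"
  shows "has_frac_packing V (lc_L Lst) (lc_V V Lst) (lc_E V E Lst)"
proof (rule has_frac_packing_upward_closed[where F = "list_cover V E", OF \<open>finite V\<close>])
  show "finite (L v)" if "list_cover V E L VH EH" "v \<in> V" for L VH EH v
    using that unfolding list_cover_def lc_L_def by auto
  show "L u \<inter> L v = {}" if "list_cover V E L VH EH" "u \<noteq> v" for L VH EH u v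
    using that unfolding list_cover_def lc_L_def by auto
  show "list_cover V E (L(v := L v - {x})) (VH - {x}) (\<lambda>a b. EH a b \<and> a \<noteq> x \<and> b \<noteq> x)"
    if "list_cover V E L VH EH" "v \<in> V" "x \<in> L v" for L VH EH v x
    using that by (rule list_cover_delete)
  show "has_frac_packing V L VH EH" if "list_cover V E L VH EH" "\<forall>v\<in>V. card (L v) = s v" for L VH EH
    using that exact unfolding list_cover_def by (auto simp: card_lc_L)
  show "list_cover V E (lc_L Lst) (lc_V V Lst) (lc_E V E Lst)"
    using assms(3) unfolding list_cover_def by blast
  show "\<forall>v\<in>V. s v \<le> card (lc_L Lst v)"
    using assms(3) by (simp add: card_lc_L)
qed

lemma corr_cover_upward_closed:
  fixes L :: "'v \<Rightarrow> 'h set"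
  assumes "finite V"
    and exact: "\<And>(L :: 'v \<Rightarrow> 'h set) VH EH. corr_cover V E L VH EH \<Longrightarrow> \<forall>v\<in>V. card (L v) = s v \<Longrightarrow> has_frac_packing V L VH EH"
    and "corr_cover V E L VH EH" "\<forall>v\<in>V. s v \<le> card (L v)"
  shows "has_frac_packing V L VH EH"
  by (rule has_frac_packing_upward_closed[where F = "corr_cover V E"])
    (fact assms corr_cover_list_finite corr_cover_disjoint corr_cover_delete)+

lemma card_UN_le_card:
  assumes "finite I" "\<And>i. i \<in> I \<Longrightarrow> card (A i) \<le> 1"
  shows "card (\<Union>i\<in>I. A i) \<le> card I"
proof -
  have "card (\<Union>i\<in>I. A i) \<le> (\<Sum>i\<in>I. card (A i))" using assms(1) by (rule card_UN_le)
  also have "\<dots> \<le> (\<Sum>i\<in>I. 1)" using assms(2) by (rule sum_mono)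
  finally show ?thesis by simp
qed

lemma extend_injection_avoiding:
  fixes bad :: "'a \<Rightarrow> nat \<Rightarrow> bool"
  assumes "finite A" "card A \<le> k" "2 * d < k"
    and bad_colours: "\<forall>x\<in>A. card {j\<in>{..<k}. bad x j} \<le> d"
    and bad_elements: "\<forall>j<k. card {x\<in>A. bad x j} \<le> d"
    and "B \<subseteq> A" "a \<in> A" "a \<notin> B"
    and inj: "inj_on \<sigma> B" and range: "\<sigma> ` B \<subseteq> {..<k}" and good: "\<forall>x\<in>B. \<not> bad x (\<sigma> x)"
  shows "\<exists>\<tau>. inj_on \<tau> (insert a B) \<and> \<tau> ` insert a B \<subseteq> {..<k} \<and> (\<forall>x\<in>insert a B. \<not> bad x (\<tau> x))"
proof (cases "\<exists>j<k. j \<notin> \<sigma> ` B \<and> \<not> bad a j")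
  case True
  then obtain j where j: "j < k" "j \<notin> \<sigma> ` B" "\<not> bad a j" by blast
  have "inj_on (\<sigma>(a := j)) (insert a B)"
    using inj j(2) \<open>a \<notin> B\<close> by (auto simp: inj_on_def)
  with j range good \<open>a \<notin> B\<close> show ?thesis by (intro exI[of _ "\<sigma>(a := j)"]) auto
next
  case False
  \<comment> \<open>All colours good for \<open>a\<close> are taken; recolour some \<open>b\<close> holding one of them with a free colour.\<close>
  have "finite B" using \<open>finite A\<close> \<open>B \<subseteq> A\<close> finite_subset by blast
  have "card B < card A"
    using \<open>finite A\<close> \<open>B \<subseteq> A\<close> \<open>a \<in> A\<close> \<open>a \<notin> B\<close> by (intro psubset_card_mono) auto
  with inj \<open>card A \<le> k\<close> have "\<sigma> ` B \<noteq> {..<k}" by (auto dest: card_image)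
  then obtain j0 where j0: "j0 < k" "j0 \<notin> \<sigma> ` B" using range by blast
  define S where "S = {b\<in>B. \<not> bad a (\<sigma> b)}"
  have "card {j\<in>{..<k}. bad a j} \<le> d" using bad_colours \<open>a \<in> A\<close> by blast
  then have "k - d \<le> card ({..<k} - {j\<in>{..<k}. bad a j})" by (subst card_Diff_subset) auto
  also have "\<dots> \<le> card (\<sigma> ` S)"
    using False \<open>finite B\<close> unfolding S_def by (intro card_mono) auto
  also have "\<dots> \<le> card S" using \<open>finite B\<close> unfolding S_def by (intro card_image_le) simp
  finally have "k - d \<le> card S" .
  moreover have "card S \<le> d" if "S \<subseteq> {x\<in>A. bad x j0}"
    using card_mono[OF _ that] bad_elements j0(1) \<open>finite A\<close> by fastforce
  ultimately obtain b where b: "b \<in> S" "\<not> bad b j0"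
    using \<open>2 * d < k\<close> \<open>B \<subseteq> A\<close> unfolding S_def by fastforce
  define \<tau> where "\<tau> = \<sigma>(b := j0, a := \<sigma> b)"
  have "b \<in> B" "\<sigma> b \<noteq> j0" using b j0(2) unfolding S_def by auto
  then have "inj_on \<tau> (insert a B)"
    using inj j0(2) \<open>a \<notin> B\<close> unfolding \<tau>_def inj_on_def by (auto split: if_splits)
  moreover have "\<tau> ` insert a B \<subseteq> {..<k}" using range j0(1) \<open>b \<in> B\<close> by (auto simp: \<tau>_def)
  moreover have "\<forall>x\<in>insert a B. \<not> bad x (\<tau> x)" using good b \<open>a \<notin> B\<close> by (auto simp: \<tau>_def S_def)
  ultimately show ?thesis by blast
qed

lemma exists_injection_avoiding:
  fixes bad :: "'a \<Rightarrow> nat \<Rightarrow> bool"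
  assumes "finite A" "card A \<le> k" "2 * d < k"
    and "\<forall>x\<in>A. card {j\<in>{..<k}. bad x j} \<le> d"
    and "\<forall>j<k. card {x\<in>A. bad x j} \<le> d"
  shows "\<exists>\<sigma>. inj_on \<sigma> A \<and> \<sigma> ` A \<subseteq> {..<k} \<and> (\<forall>x\<in>A. \<not> bad x (\<sigma> x))"
  using \<open>finite A\<close> order.refl[of A]
proof (induction A rule: finite_subset_induct')
  case empty
  then show ?case by simp
next
  case (insert a B)
  then obtain \<sigma> where "inj_on \<sigma> B" "\<sigma> ` B \<subseteq> {..<k}" "\<forall>x\<in>B. \<not> bad x (\<sigma> x)" by blast
  with insert.hyps show ?case by (intro extend_injection_avoiding[OF assms]) auto
qed

lemma card_colours_of_neighbours_le:
  assumes c: "corr_cover V E L VH EH" and "W \<subseteq> V" "finite W" "v \<in> V" "v \<notin> W" "x \<in> L v"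
  shows "card (col ` {y\<in>\<Union>(L ` W). EH x y}) \<le> card W"
proof -
  have N: "{y\<in>\<Union>(L ` W). EH x y} = (\<Union>u\<in>W. {y\<in>L u. EH x y})" by auto
  have "finite (\<Union>u\<in>W. {y\<in>L u. EH x y})"
    using \<open>W \<subseteq> V\<close> by (intro finite_UN_I[OF \<open>finite W\<close>]) (simp add: corr_cover_list_finite[OF c] subset_iff)
  then have "card (col ` {y\<in>\<Union>(L ` W). EH x y}) \<le> card (\<Union>u\<in>W. {y\<in>L u. EH x y})"
    unfolding N by (rule card_image_le)
  also have "\<dots> \<le> card W"
  proof (rule card_UN_le_card[OF \<open>finite W\<close>])
    fix u assume "u \<in> W"
    with assms(2-6) show "card {y\<in>L u. EH x y} \<le> 1"
      by (intro corr_cover_card_neighbours_le_1[OF c]) auto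
  qed
  finally show ?thesis .
qed

lemma card_neighbours_of_colour_le:
  assumes c: "corr_cover V E L VH EH" and "W \<subseteq> V" "finite W" "v \<in> V" "v \<notin> W"
    and inj: "\<forall>u\<in>W. inj_on col (L u)"
  shows "card {x\<in>L v. \<exists>y\<in>\<Union>(L ` W). EH x y \<and> col y = j} \<le> card W"
proof -
  have "{x\<in>L v. \<exists>y\<in>\<Union>(L ` W). EH x y \<and> col y = j} = (\<Union>u\<in>W. {x\<in>L v. \<exists>y\<in>L u. EH x y \<and> col y = j})"
    by auto
  also have "card \<dots> \<le> card W"
  proof (rule card_UN_le_card[OF \<open>finite W\<close>])
    fix u assume "u \<in> W"
    show "card {x\<in>L v. \<exists>y\<in>L u. EH x y \<and> col y = j} \<le> 1"
    proof (cases "\<exists>y\<in>L u. col y = j")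
      case False
      then have empty: "{x\<in>L v. \<exists>y\<in>L u. EH x y \<and> col y = j} = {}" by blast
      show ?thesis unfolding empty by simp
    next
      case True
      \<comment> \<open>The colour \<open>j\<close> occurs only once in \<open>L u\<close>, and that entry has at most one neighbour in \<open>L v\<close>.\<close>
      then obtain y0 where y0: "y0 \<in> L u" "col y0 = j" by blast
      have "EH y0 x" if "y \<in> L u" "EH x y" "col y = j" for x y
      proof -
        have "y = y0" using inj_onD[OF bspec[OF inj \<open>u \<in> W\<close>]] that(1,3) y0 by simp
        then show ?thesis using corr_cover_edgeD[OF c that(2)] by simp
      qed
      then have sub: "{x\<in>L v. \<exists>y\<in>L u. EH x y \<and> col y = j} \<subseteq> {x\<in>L v. EH y0 x}" by blast
      moreover have "card {x\<in>L v. EH y0 x} \<le> 1"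
        using assms(2-5) \<open>u \<in> W\<close> y0(1) by (intro corr_cover_card_neighbours_le_1[OF c]) auto
      moreover have "finite {x\<in>L v. EH y0 x}" using corr_cover_list_finite[OF c \<open>v \<in> V\<close>] by simp
      ultimately show ?thesis using card_mono[OF _ sub] by linarith
    qed
  qed
  finally show ?thesis .
qed

definition proper_colouring_on ::
  "'v set \<Rightarrow> nat \<Rightarrow> ('v \<Rightarrow> 'h set) \<Rightarrow> ('h \<Rightarrow> 'h \<Rightarrow> bool) \<Rightarrow> ('h \<Rightarrow> nat) \<Rightarrow> bool" where
  "proper_colouring_on W k L EH col \<longleftrightarrow>
     (\<forall>u\<in>W. inj_on col (L u) \<and> col ` L u \<subseteq> {..<k}) \<and>
     (\<forall>x\<in>\<Union>(L ` W). \<forall>y\<in>\<Union>(L ` W). EH x y \<longrightarrow> col x \<noteq> col y)"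

lemma list_colouring_avoiding_neighbours:
  assumes c: "corr_cover V E L VH EH" and "finite V" "W \<subseteq> V" "v \<in> V" "v \<notin> W"
    and "card (L v) = k" "2 * card V < k"
    and inj: "\<forall>u\<in>W. inj_on col (L u)"
  shows "\<exists>\<sigma>. inj_on \<sigma> (L v) \<and> \<sigma> ` L v \<subseteq> {..<k} \<and> (\<forall>x\<in>L v. \<forall>y\<in>\<Union>(L ` W). EH x y \<longrightarrow> col y \<noteq> \<sigma> x)"
proof -
  define bad where "bad x j \<longleftrightarrow> (\<exists>y\<in>\<Union>(L ` W). EH x y \<and> col y = j)" for x j
  have "finite W" using \<open>finite V\<close> \<open>W \<subseteq> V\<close> finite_subset by blast
  have finU: "finite (\<Union>(L ` W))"
    using \<open>finite W\<close> \<open>W \<subseteq> V\<close> by (simp add: corr_cover_list_finite[OF c] subset_iff)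
  have "card W \<le> card V" using \<open>finite V\<close> \<open>W \<subseteq> V\<close> by (rule card_mono)
  have "card {j\<in>{..<k}. bad x j} \<le> card V" if "x \<in> L v" for x
  proof -
    have "{j\<in>{..<k}. bad x j} \<subseteq> col ` {y\<in>\<Union>(L ` W). EH x y}" unfolding bad_def by blast
    moreover have "finite (col ` {y\<in>\<Union>(L ` W). EH x y})"
      by (intro finite_imageI finite_subset[OF _ finU]) blast
    ultimately have "card {j\<in>{..<k}. bad x j} \<le> card (col ` {y\<in>\<Union>(L ` W). EH x y})"
      by (intro card_mono)
    also have "\<dots> \<le> card W"
      by (rule card_colours_of_neighbours_le[OF c \<open>W \<subseteq> V\<close> \<open>finite W\<close> \<open>v \<in> V\<close> \<open>v \<notin> W\<close> that])
    finally show ?thesis using \<open>card W \<le> card V\<close> by linarith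
  qed
  moreover have "card {x\<in>L v. bad x j} \<le> card V" for j
    using card_neighbours_of_colour_le[OF c \<open>W \<subseteq> V\<close> \<open>finite W\<close> \<open>v \<in> V\<close> \<open>v \<notin> W\<close> inj, of j]
      \<open>card W \<le> card V\<close> unfolding bad_def by simp
  ultimately obtain \<sigma> where "inj_on \<sigma> (L v)" "\<sigma> ` L v \<subseteq> {..<k}" "\<forall>x\<in>L v. \<not> bad x (\<sigma> x)"
    using exists_injection_avoiding[of "L v" k "card V" bad] corr_cover_list_finite[OF c \<open>v \<in> V\<close>]
      \<open>card (L v) = k\<close> \<open>2 * card V < k\<close> by auto
  then show ?thesis unfolding bad_def by auto
qed

lemma proper_colouring_on_insert:
  assumes c: "corr_cover V E L VH EH" and "finite V" "W \<subseteq> V" "v \<in> V" "v \<notin> W"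
    and "card (L v) = k" "2 * card V < k"
    and col: "proper_colouring_on W k L EH col"
  shows "\<exists>col'. proper_colouring_on (insert v W) k L EH col'"
proof -
  have "\<forall>u\<in>W. inj_on col (L u)" using col unfolding proper_colouring_on_def by blast
  then obtain \<sigma> where \<sigma>: "inj_on \<sigma> (L v)" "\<sigma> ` L v \<subseteq> {..<k}"
      "\<forall>x\<in>L v. \<forall>y\<in>\<Union>(L ` W). EH x y \<longrightarrow> col y \<noteq> \<sigma> x"
    using list_colouring_avoiding_neighbours[OF assms(1-7)] by blast
  define col' where "col' z = (if z \<in> L v then \<sigma> z else col z)" for z
  have disjoint: "L u \<inter> L v = {}" if "u \<in> W" for u
    using corr_cover_disjoint[OF c] that assms(3-5) by blast
  have "inj_on col' (L u) \<and> col' ` L u \<subseteq> {..<k}" if "u \<in> insert v W" for u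
  proof (cases "u = v")
    case True
    then show ?thesis using \<sigma> inj_on_cong[of "L v" col' \<sigma>] by (simp add: col'_def)
  next
    case False
    with that disjoint have "\<forall>z\<in>L u. col' z = col z" by (auto simp: col'_def)
    with False that col show ?thesis
      unfolding proper_colouring_on_def by (simp add: inj_on_cong[of "L u" col' col])
  qed
  moreover have "col' x \<noteq> col' y" if "x \<in> \<Union>(L ` insert v W)" "y \<in> \<Union>(L ` insert v W)" "EH x y" for x y
  proof -
    have "EH y x" "x \<noteq> y" using corr_cover_edgeD[OF c \<open>EH x y\<close>] by simp_all
    have proper: "\<forall>x\<in>\<Union>(L ` W). \<forall>y\<in>\<Union>(L ` W). EH x y \<longrightarrow> col x \<noteq> col y"
      using col unfolding proper_colouring_on_def by blast
    show ?thesis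
    proof (cases "x \<in> L v"; cases "y \<in> L v")
      assume "x \<in> L v" "y \<in> L v"
      then show ?thesis using \<sigma>(1) \<open>x \<noteq> y\<close> by (simp add: col'_def inj_on_eq_iff)
    next
      assume "x \<in> L v" "y \<notin> L v"
      then have "col y \<noteq> \<sigma> x" using \<sigma>(3) that(2) \<open>EH x y\<close> by blast
      with \<open>x \<in> L v\<close> \<open>y \<notin> L v\<close> show ?thesis by (simp add: col'_def)
    next
      assume "x \<notin> L v" "y \<in> L v"
      then have "col x \<noteq> \<sigma> y" using \<sigma>(3) that(1) \<open>EH y x\<close> by blast
      with \<open>x \<notin> L v\<close> \<open>y \<in> L v\<close> show ?thesis by (simp add: col'_def)
    next
      assume "x \<notin> L v" "y \<notin> L v"
      with that have "x \<in> \<Union>(L ` W)" "y \<in> \<Union>(L ` W)" by auto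
      with proper \<open>EH x y\<close> have "col x \<noteq> col y" by blast
      with \<open>x \<notin> L v\<close> \<open>y \<notin> L v\<close> show ?thesis by (simp add: col'_def)
    qed
  qed
  ultimately show ?thesis unfolding proper_colouring_on_def by blast
qed

lemma corr_cover_proper_colouring:
  assumes c: "corr_cover V E L VH EH" and "finite V"
    and sizes: "\<forall>v\<in>V. card (L v) = k" and "2 * card V < k"
  shows "\<exists>col. proper_colouring_on V k L EH col"
proof -
  have "\<exists>col. proper_colouring_on W k L EH col" if "W \<subseteq> V" for W
    using finite_subset[OF that \<open>finite V\<close>] that
  proof (induction W rule: finite_subset_induct')
    case empty
    show ?case by (simp add: proper_colouring_on_def)
  next
    case (insert v W)
    then show ?case
      using proper_colouring_on_insert[OF c \<open>finite V\<close>] sizes \<open>2 * card V < k\<close> by blast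
  qed
  then show ?thesis by blast
qed

lemma has_frac_packing_of_colouring:
  fixes col :: "'h \<Rightarrow> nat"
  assumes c: "corr_cover V E L VH EH"
    and bij: "\<forall>v\<in>V. bij_betw col (L v) {..<k}" and proper: "\<forall>x y. EH x y \<longrightarrow> col x \<noteq> col y"
    and "0 < k"
  shows "has_frac_packing V L VH EH"
proof -
  have colours: "set_pmf (pmf_of_set {..<k}) = {..<k}"
    using \<open>0 < k\<close> by (intro set_pmf_of_set) auto
  define p where "p = map_pmf (\<lambda>j. {x\<in>VH. col x = j}) (pmf_of_set {..<k})"
  have "indep_transversal V L VH EH I" if I: "I \<in> set_pmf p" for I
  proof -
    obtain j where j: "j < k" "I = {x\<in>VH. col x = j}"
      using I unfolding p_def colours set_map_pmf by blast
    have "card (I \<inter> L v) = 1" if "v \<in> V" for v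
    proof -
      have b: "inj_on col (L v)" "col ` L v = {..<k}" using bij that by (auto simp: bij_betw_def)
      then obtain x where x: "x \<in> L v" "col x = j" using j(1) by (metis imageE lessThan_iff)
      then have "I \<inter> L v = {x}"
        using b(1) j(2) corr_cover_list_subset[OF c that] by (auto dest: inj_onD)
      then show ?thesis by simp
    qed
    moreover have "I \<subseteq> VH" using j(2) by blast
    moreover have "\<forall>x\<in>I. \<forall>y\<in>I. \<not> EH x y" using j(2) proper by (metis (mono_tags) mem_Collect_eq)
    ultimately show ?thesis unfolding indep_transversal_def by blast
  qed
  moreover have "measure_pmf.prob p {I. y \<in> I} = 1 / real (card (L v))" if "v \<in> V" "y \<in> L v" for v y
  proof -
    have "y \<in> VH" using corr_cover_list_subset[OF c] that by blast
    moreover have "col y < k" using bij_betwE[OF bspec[OF bij \<open>v \<in> V\<close>]] \<open>y \<in> L v\<close> by blast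
    ultimately have hits: "{..<k} \<inter> (\<lambda>j. {x\<in>VH. col x = j}) -` {I. y \<in> I} = {col y}" by auto
    have "measure_pmf.prob p {I. y \<in> I}
        = measure_pmf.prob (pmf_of_set {..<k}) ((\<lambda>j. {x\<in>VH. col x = j}) -` {I. y \<in> I})"
      unfolding p_def by (rule measure_map_pmf)
    also have "\<dots> = card ({..<k} \<inter> (\<lambda>j. {x\<in>VH. col x = j}) -` {I. y \<in> I}) / card {..<k}"
      using \<open>0 < k\<close> by (intro measure_pmf_of_set) auto
    also have "\<dots> = 1 / real k" unfolding hits by simp
    also have "k = card (L v)" using bij_betw_same_card[OF bspec[OF bij \<open>v \<in> V\<close>]] by simp
    finally show ?thesis .
  qed
  ultimately show ?thesis unfolding has_frac_packing_def by blast
qed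

lemma has_frac_packing_large_lists:
  assumes c: "corr_cover V E L VH EH" and "finite V"
    and sizes: "\<forall>v\<in>V. card (L v) = k" and "2 * card V < k"
  shows "has_frac_packing V L VH EH"
proof -
  obtain col where col: "proper_colouring_on V k L EH col"
    using corr_cover_proper_colouring[OF assms] by blast
  have "bij_betw col (L v) {..<k}" if "v \<in> V" for v
  proof -
    have "inj_on col (L v)" "col ` L v \<subseteq> {..<k}"
      using col that unfolding proper_colouring_on_def by blast+
    moreover have "card (col ` L v) = card {..<k}" using sizes that \<open>inj_on col (L v)\<close> by (simp add: card_image)
    ultimately show ?thesis unfolding bij_betw_def by (simp add: card_subset_eq)
  qed
  moreover have "col x \<noteq> col y" if "EH x y" for x y
  proof -
    have "x \<in> \<Union>(L ` V)" "y \<in> \<Union>(L ` V)"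
      using corr_cover_edgeD[OF c that] corr_cover_UN[OF c] by auto
    with col that show ?thesis unfolding proper_colouring_on_def by blast
  qed
  ultimately show ?thesis using \<open>2 * card V < k\<close> by (intro has_frac_packing_of_colouring[OF c]) auto
qed

definition image_edges :: "('h \<Rightarrow> 'k) \<Rightarrow> 'h set \<Rightarrow> ('h \<Rightarrow> 'h \<Rightarrow> bool) \<Rightarrow> 'k \<Rightarrow> 'k \<Rightarrow> bool" where
  "image_edges f VH EH a b \<longleftrightarrow> (\<exists>x\<in>VH. \<exists>y\<in>VH. a = f x \<and> b = f y \<and> EH x y)"

lemma image_edges_image:
  "inj_on f VH \<Longrightarrow> x \<in> VH \<Longrightarrow> y \<in> VH \<Longrightarrow> image_edges f VH EH (f x) (f y) \<longleftrightarrow> EH x y"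
  unfolding image_edges_def by (auto dest: inj_onD)

lemma corr_cover_image:
  assumes c: "corr_cover V E L VH EH" and f: "inj_on f VH"
  shows "corr_cover V E (\<lambda>v. f ` L v) (f ` VH) (image_edges f VH EH)"
proof -
  have sub: "\<And>v. v \<in> V \<Longrightarrow> L v \<subseteq> VH" using corr_cover_list_subset[OF c] .
  have edge: "image_edges f VH EH (f x) (f y) \<longleftrightarrow> EH x y" if "x \<in> VH" "y \<in> VH" for x y
    using image_edges_image[OF f that] .
  show ?thesis unfolding corr_cover_def
  proof (intro conjI)
    show "finite (f ` VH)" using corr_cover_finite[OF c] by simp
    show "\<forall>a b. image_edges f VH EH a b \<longrightarrow> a \<in> f ` VH \<and> b \<in> f ` VH \<and> a \<noteq> b \<and> image_edges f VH EH b a"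
    proof (intro allI impI)
      fix a b assume "image_edges f VH EH a b"
      then obtain x y where "x \<in> VH" "y \<in> VH" "a = f x" "b = f y" "EH x y" unfolding image_edges_def by blast
      with corr_cover_edgeD[OF c \<open>EH x y\<close>] show "a \<in> f ` VH \<and> b \<in> f ` VH \<and> a \<noteq> b \<and> image_edges f VH EH b a"
        using edge inj_on_eq_iff[OF f] by auto
    qed
    show "(\<Union>v\<in>V. f ` L v) = f ` VH" using corr_cover_UN[OF c] by blast
    show "\<forall>u\<in>V. \<forall>v\<in>V. u \<noteq> v \<longrightarrow> f ` L u \<inter> f ` L v = {}"
      using corr_cover_disjoint[OF c] inj_on_image_Int[OF f sub sub] by (metis image_empty)
    show "\<forall>v\<in>V. \<forall>a\<in>f ` L v. \<forall>b\<in>f ` L v. a \<noteq> b \<longrightarrow> image_edges f VH EH a b"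
    proof (clarsimp)
      fix v x y assume "v \<in> V" "x \<in> L v" "y \<in> L v" "f x \<noteq> f y"
      then show "image_edges f VH EH (f x) (f y)"
        using corr_cover_clique[OF c] edge sub by blast
    qed
    show "\<forall>u\<in>V. \<forall>v\<in>V. u \<noteq> v \<and> \<not> E u v \<longrightarrow> (\<forall>a\<in>f ` L u. \<forall>b\<in>f ` L v. \<not> image_edges f VH EH a b)"
    proof (clarsimp)
      fix u v x y assume "u \<in> V" "v \<in> V" "u \<noteq> v" "\<not> E u v" "x \<in> L u" "y \<in> L v"
        "image_edges f VH EH (f x) (f y)"
      then show False using corr_cover_adjacent[OF c] edge sub by blast
    qed
    show "\<forall>u\<in>V. \<forall>v\<in>V. E u v \<longrightarrow> (\<forall>a\<in>f ` L u. \<forall>b\<in>f ` L v. \<forall>b'\<in>f ` L v.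
        image_edges f VH EH a b \<and> image_edges f VH EH a b' \<longrightarrow> b = b')"
    proof (clarsimp)
      fix u v x y y' assume "u \<in> V" "v \<in> V" "E u v" "x \<in> L u" "y \<in> L v" "y' \<in> L v"
        "image_edges f VH EH (f x) (f y)" "image_edges f VH EH (f x) (f y')"
      then show "f y = f y'" using corr_cover_matching[OF c] edge sub by blast
    qed
  qed
qed

lemma has_frac_packing_of_image:
  assumes c: "corr_cover V E L VH EH" and f: "inj_on f VH"
    and "has_frac_packing V (\<lambda>v. f ` L v) (f ` VH) (image_edges f VH EH)"
  shows "has_frac_packing V L VH EH"
proof -
  obtain q where q_transversal: "\<forall>J\<in>set_pmf q. indep_transversal V (\<lambda>v. f ` L v) (f ` VH) (image_edges f VH EH) J"
    and q_prob: "\<forall>v\<in>V. \<forall>a\<in>f ` L v. measure_pmf.prob q {J. a \<in> J} = 1 / real (card (f ` L v))"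
    using assms(3) unfolding has_frac_packing_def by blast
  have sub: "\<And>v. v \<in> V \<Longrightarrow> L v \<subseteq> VH" using corr_cover_list_subset[OF c] .
  define p where "p = map_pmf (\<lambda>J. {x\<in>VH. f x \<in> J}) q"
  have "indep_transversal V L VH EH I" if "I \<in> set_pmf p" for I
  proof -
    obtain J where J: "J \<in> set_pmf q" "I = {x\<in>VH. f x \<in> J}" using \<open>I \<in> set_pmf p\<close> unfolding p_def by auto
    then have t: "indep_transversal V (\<lambda>v. f ` L v) (f ` VH) (image_edges f VH EH) J" using q_transversal by blast
    have "\<not> EH x y" if "x \<in> I" "y \<in> I" for x y
    proof -
      have "x \<in> VH" "y \<in> VH" "f x \<in> J" "f y \<in> J" using that J(2) by auto
      moreover from this(3,4) have "\<not> image_edges f VH EH (f x) (f y)"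
        using t unfolding indep_transversal_def by blast
      ultimately show ?thesis using image_edges_image[OF f] by simp
    qed
    moreover have "card (I \<inter> L v) = 1" if "v \<in> V" for v
    proof -
      have "f ` (I \<inter> L v) = J \<inter> f ` L v" using J(2) sub[OF that] by auto
      moreover have "inj_on f (I \<inter> L v)" using f J(2) by (auto intro: inj_on_subset)
      ultimately have "card (I \<inter> L v) = card (J \<inter> f ` L v)" by (metis card_image)
      then show ?thesis using t that unfolding indep_transversal_def by simp
    qed
    ultimately show ?thesis using J(2) unfolding indep_transversal_def by auto
  qed
  moreover have "measure_pmf.prob p {I. y \<in> I} = 1 / real (card (L v))" if "v \<in> V" "y \<in> L v" for v y
  proof -
    have "y \<in> VH" using sub that by blast
    then have "(\<lambda>J. {x\<in>VH. f x \<in> J}) -` {I. y \<in> I} = {J. f y \<in> J}" by auto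
    then have "measure_pmf.prob p {I. y \<in> I} = measure_pmf.prob q {J. f y \<in> J}"
      unfolding p_def by (simp add: measure_map_pmf)
    also have "\<dots> = 1 / real (card (f ` L v))" using q_prob that by blast
    also have "card (f ` L v) = card (L v)" using inj_on_subset[OF f sub[OF \<open>v \<in> V\<close>]] by (rule card_image)
    finally show ?thesis .
  qed
  ultimately show ?thesis unfolding has_frac_packing_def by blast
qed

lemma chi_c_bullet_exact:
  fixes L :: "'v \<Rightarrow> 'h set"
  assumes "finite V" and c: "corr_cover V E L VH EH" and sizes: "\<forall>v\<in>V. card (L v) = chi_c_bullet V E"
  shows "has_frac_packing V L VH EH"
proof -
  let ?good = "\<lambda>k. k \<ge> 1 \<and> (\<forall>(L :: 'v \<Rightarrow> nat set) VH EH. corr_cover V E L VH EH \<and> (\<forall>v\<in>V. card (L v) = k)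
        \<longrightarrow> has_frac_packing V L VH EH)"
  \<comment> \<open>Lists longer than twice the number of vertices always have a packing, so the least element exists.\<close>
  have "?good (2 * card V + 1)" by (auto intro: has_frac_packing_large_lists[OF _ \<open>finite V\<close>])
  then have "?good (chi_c_bullet V E)" unfolding chi_c_bullet_def by (rule LeastI)
  obtain f :: "'h \<Rightarrow> nat" where f: "inj_on f VH"
    using finite_imp_inj_to_nat_seg[OF corr_cover_finite[OF c]] by blast
  have "card (f ` L v) = chi_c_bullet V E" if "v \<in> V" for v
    using card_image[OF inj_on_subset[OF f corr_cover_list_subset[OF c that]]] sizes that by simp
  with \<open>?good (chi_c_bullet V E)\<close> corr_cover_image[OF c f]
  have "has_frac_packing V (\<lambda>v. f ` L v) (f ` VH) (image_edges f VH EH)" by blast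
  then show ?thesis by (rule has_frac_packing_of_image[OF c f])
qed

theorem mainTheorem10:
  fixes V :: "'v set" and E :: "'v \<Rightarrow> 'v \<Rightarrow> bool" and s :: "'v \<Rightarrow> nat"
  assumes "graph V E"
  shows
    "((\<forall>(L :: 'v \<Rightarrow> 'h set) VH EH. corr_cover V E L VH EH \<and> (\<forall>v\<in>V. card (L v) = s v)
          \<longrightarrow> has_frac_packing V L VH EH)
      \<longrightarrow> (\<forall>(L :: 'v \<Rightarrow> 'h set) VH EH. corr_cover V E L VH EH \<and> (\<forall>v\<in>V. card (L v) \<ge> s v)
          \<longrightarrow> has_frac_packing V L VH EH))
   \<and> ((\<forall>Lst :: 'v \<Rightarrow> nat set. (\<forall>v\<in>V. finite (Lst v) \<and> card (Lst v) = s v)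
          \<longrightarrow> has_frac_packing V (lc_L Lst) (lc_V V Lst) (lc_E V E Lst))
      \<longrightarrow> (\<forall>Lst :: 'v \<Rightarrow> nat set. (\<forall>v\<in>V. finite (Lst v) \<and> card (Lst v) \<ge> s v)
          \<longrightarrow> has_frac_packing V (lc_L Lst) (lc_V V Lst) (lc_E V E Lst)))
   \<and> (\<forall>(L :: 'v \<Rightarrow> 'h set) VH EH. corr_cover V E L VH EH \<and> (\<forall>v\<in>V. card (L v) \<ge> chi_c_bullet V E)
          \<longrightarrow> has_frac_packing V L VH EH)"
proof -
  have "finite V" using assms unfolding graph_def by blast
  show ?thesis
  proof (intro conjI impI allI)
    fix L :: "'v \<Rightarrow> 'h set" and VH EH
    assume "\<forall>(L :: 'v \<Rightarrow> 'h set) VH EH. corr_cover V E L VH EH \<and> (\<forall>v\<in>V. card (L v) = s v)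
        \<longrightarrow> has_frac_packing V L VH EH"
      and "corr_cover V E L VH EH \<and> (\<forall>v\<in>V. s v \<le> card (L v))"
    then show "has_frac_packing V L VH EH"
      using corr_cover_upward_closed[OF \<open>finite V\<close>] by blast
  next
    fix Lst :: "'v \<Rightarrow> nat set"
    assume "\<forall>Lst :: 'v \<Rightarrow> nat set. (\<forall>v\<in>V. finite (Lst v) \<and> card (Lst v) = s v)
        \<longrightarrow> has_frac_packing V (lc_L Lst) (lc_V V Lst) (lc_E V E Lst)"
      and "\<forall>v\<in>V. finite (Lst v) \<and> s v \<le> card (Lst v)"
    then show "has_frac_packing V (lc_L Lst) (lc_V V Lst) (lc_E V E Lst)"
      using list_cover_upward_closed[OF \<open>finite V\<close>] by blast
  next
    fix L :: "'v \<Rightarrow> 'h set" and VH EH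
    assume "corr_cover V E L VH EH \<and> (\<forall>v\<in>V. chi_c_bullet V E \<le> card (L v))"
    then show "has_frac_packing V L VH EH"
      by (intro corr_cover_upward_closed[where s = "\<lambda>_. chi_c_bullet V E", OF \<open>finite V\<close>
          chi_c_bullet_exact[OF \<open>finite V\<close>]]) auto
  qed
qed

end
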